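(* Let $p$ be an odd prime, let $\Delta\in\mathbb{Z}$ with $\Delta\equiv 3\pmod 4$ be a quadratic non-residue modulo $p$, and let $\mathfrak{p}=p\mathbb{Z}[\sqrt{\Delta}]$. Let $A_p=\prod_{0\le k\le p-1}(k+\sqrt{\Delta})$. Then $$A_p^{\frac{(p-1)(p-3)}{4}}\equiv\begin{cases}\Delta^{-\frac{p-1}{4}}\pmod{\mathfrak{p}}&\text{if } p\equiv 1\pmod 4,\\ (-1)^{\frac{p-3}{4}}\pmod{\mathfrak{p}}&\text{if } p\equiv 3\pmod 4,\end{cases}$$ where $\Delta^{-1}$ denotes the inverse of $\Delta$ modulo $p$. *)

theory Defs
  imports "HOL-Number_Theory.Number_Theory"
begin

text \<open>Elements of Z[sqrt D] are represented as pairs (a, b) of integers, meaning a + b sqrt D.\<close>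

definition zs_mult :: "int \<Rightarrow> int \<times> int \<Rightarrow> int \<times> int \<Rightarrow> int \<times> int" where
  "zs_mult D x y = (fst x * fst y + D * snd x * snd y, fst x * snd y + snd x * fst y)"

fun zs_pow :: "int \<Rightarrow> int \<times> int \<Rightarrow> nat \<Rightarrow> int \<times> int" where
  "zs_pow D x 0 = (1, 0)"
| "zs_pow D x (Suc n) = zs_mult D x (zs_pow D x n)"

fun zs_A :: "int \<Rightarrow> nat \<Rightarrow> int \<times> int" where
  "zs_A D 0 = (1, 0)"
| "zs_A D (Suc n) = zs_mult D (int n, 1) (zs_A D n)"

text \<open>Congruence modulo the ideal p Z[sqrt D]: both coordinates of the difference divisible by p.\<close>
definition zs_cong :: "int \<Rightarrow> int \<times> int \<Rightarrow> int \<times> int \<Rightarrow> bool" where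
  "zs_cong p x y \<longleftrightarrow> p dvd (fst x - fst y) \<and> p dvd (snd x - snd y)"

end

theory Submission
  imports Defs "HOL-Computational_Algebra.Polynomial"
begin

text \<open>Every residue modulo \<open>p\<close> is a root of both \<open>(X + 0) (X + 1) \<cdots> (X + (p - 1))\<close> and
  \<open>X\<^sup>p - X\<close>, so by Lagrange's theorem the two integer polynomials are congruent modulo \<open>p\<close>.
  Evaluating at \<open>\<surd>D\<close> gives \<open>A\<^sub>p \<equiv> \<surd>D\<^sup>p - \<surd>D = (D\<^bsup>(p-1)/2\<^esup> - 1) \<surd>D \<equiv> -2 \<surd>D\<close>
  by Euler's criterion, hence \<open>A\<^sub>p\<^bsup>2j\<^esup> \<equiv> (4 D)\<^sup>j\<close>. Since \<open>(p - 1) (p - 3) / 4\<close> is even,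
  what remains is a congruence of integers, which follows from Euler's criterion, Fermat's theorem
  and, for \<open>p \<equiv> 1 (mod 4)\<close>, from \<open>2\<^bsup>(p-1)/2\<^esup> \<equiv> (-1)\<^bsup>(p-1)/4\<^esup>\<close>.\<close>

lemma one_not_cong_neg_one:
  fixes m :: int
  assumes "2 < m"
  shows "\<not> [1 = -1] (mod m)"
  using assms zdvd_not_zless[of 2 m] by (simp add: cong_iff_dvd_diff)

lemma fermat_theorem_int:
  assumes "prime p" "\<not> int p dvd a"
  shows "[a ^ (p - 1) = 1] (mod int p)"
proof -
  have "residues (int p)"
    using prime_gt_1_nat[OF assms(1)] by (simp add: residues_def)
  moreover have "coprime a (int p)"
    using assms prime_imp_coprime[of "int p" a] by (simp add: coprime_commute)
  ultimately show ?thesis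
    using residues.euler_theorem totient_prime[OF assms(1)] by fastforce
qed

lemma fermat_little_int:
  assumes "prime p"
  shows "[a ^ p = a] (mod int p)"
proof (cases "int p dvd a")
  case True
  then show ?thesis
    using prime_gt_0_nat[OF assms] dvd_power[of p a]
    by (simp add: cong_iff_dvd_diff dvd_trans[OF True])
next
  case False
  have "[a * a ^ (p - 1) = a * 1] (mod int p)"
    using fermat_theorem_int[OF assms False] by (rule cong_scalar_left)
  then show ?thesis
    using prime_gt_0_nat[OF assms] by (simp flip: power_Suc)
qed

lemma nonresidue_pow_half_cong:
  assumes "prime p" "2 < p" "\<not> QuadRes (int p) D"
  shows "[D ^ ((p - 1) div 2) = -1] (mod int p)"
proof -
  have "\<not> [D = 0] (mod int p)"
    using assms(3) unfolding QuadRes_def by (metis cong_sym zero_power2)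
  then have "Legendre D (int p) = -1"
    using assms(3) by (simp add: Legendre_def)
  then show ?thesis
    using euler_criterion[OF assms(1,2), of D] by (simp add: cong_sym)
qed

lemma neg_one_square_mod_prime:
  assumes "prime p" "p = 4 * e + 1"
  obtains i where "[i ^ 2 = -1] (mod int p)"
proof -
  have "2 < p"
    using assms prime_gt_1_nat[OF assms(1)] by auto
  have "QuadRes (int p) (-1)"
  proof (rule ccontr)
    assume "\<not> QuadRes (int p) (-1)"
    from nonresidue_pow_half_cong[OF assms(1) \<open>2 < p\<close> this] have "[1 = -1] (mod int p)"
      using assms(2) by simp
    then show False
      using one_not_cong_neg_one[of "int p"] \<open>2 < p\<close> by simp
  qed
  then show ?thesis
    using that unfolding QuadRes_def by blast
qed

text \<open>With \<open>i\<close> a square root of \<open>-1\<close>, \<open>(1 + i)\<^sup>2 = 2 i\<close>; raising to the power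
  \<open>2 e = (p - 1) / 2\<close> and applying Fermat to \<open>1 + i\<close> gives the claim.\<close>
lemma two_pow_cong_neg_one_pow:
  assumes "prime p" "p = 4 * e + 1"
  shows "[2 ^ (2 * e) = (-1) ^ e] (mod int p)"
proof -
  obtain i where i: "[i ^ 2 = -1] (mod int p)"
    using neg_one_square_mod_prime[OF assms] .
  have "2 < p"
    using assms prime_gt_1_nat[OF assms(1)] by auto
  have "\<not> int p dvd 1 + i"
  proof
    assume "int p dvd 1 + i"
    then have "[i = -1] (mod int p)"
      by (simp add: cong_iff_dvd_diff add.commute)
    then have "[1 = -1] (mod int p)"
      using i by (metis cong_pow cong_sym cong_trans neg_one_even_power even_numeral)
    then show False
      using one_not_cong_neg_one[of "int p"] \<open>2 < p\<close> by simp
  qed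
  then have "[((1 + i) ^ 2) ^ (2 * e) = 1] (mod int p)"
    using fermat_theorem_int[OF assms(1)] assms(2) by (simp flip: power_mult)
  moreover have "[(1 + i) ^ 2 = 2 * i] (mod int p)"
  proof -
    have "[(1 + i) ^ 2 = 2 * i + (i ^ 2 + 1)] (mod int p)"
      by (simp add: power2_eq_square algebra_simps)
    also have "[2 * i + (i ^ 2 + 1) = 2 * i + (-1 + 1)] (mod int p)"
      using i by (intro cong_add cong_refl)
    finally show ?thesis by simp
  qed
  then have "[((1 + i) ^ 2) ^ (2 * e) = 2 ^ (2 * e) * (i ^ 2) ^ e] (mod int p)"
    by (metis cong_pow power_mult power_mult_distrib)
  moreover have "[2 ^ (2 * e) * (i ^ 2) ^ e = 2 ^ (2 * e) * (-1) ^ e] (mod int p)"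
    using i by (intro cong_mult cong_pow cong_refl)
  ultimately have "[2 ^ (2 * e) * (-1) ^ e = 1] (mod int p)"
    by (metis cong_sym cong_trans)
  then have "[2 ^ (2 * e) * (-1) ^ e * (-1) ^ e = (-1) ^ e] (mod int p)"
    by (metis cong_scalar_right mult_1)
  then show ?thesis
    by (simp add: mult.assoc flip: power_mult_distrib)
qed

section \<open>Lagrange's theorem modulo a prime\<close>

lemma const_poly_prime_dvd_if_roots_mod:
  fixes p :: int and f :: "int poly"
  assumes "prime p" "finite S"
    and "\<And>a b. a \<in> S \<Longrightarrow> b \<in> S \<Longrightarrow> a \<noteq> b \<Longrightarrow> \<not> p dvd a - b"
    and "degree f < card S"
    and "\<And>a. a \<in> S \<Longrightarrow> p dvd poly f a"
  shows "[:p:] dvd f"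
  using assms(2-5)
proof (induction S arbitrary: f rule: finite_induct)
  case empty
  then show ?case by simp
next
  case (insert a S)
  define g where "g = synthetic_div f a"
  have f_eq: "f = [:-a, 1:] * g + [:poly f a:]"
    unfolding g_def by (rule synthetic_div_correct'[symmetric])
  have "[:p:] dvd g"
  proof (cases "degree f = 0")
    case True
    then have "g = 0"
      by (simp add: g_def synthetic_div_eq_0_iff)
    then show ?thesis
      by simp
  next
    case False
    show ?thesis
    proof (rule insert.IH)
      show "degree g < card S"
        using insert False by (simp add: g_def degree_synthetic_div)
      show "\<not> p dvd b - c" if "b \<in> S" "c \<in> S" "b \<noteq> c" for b c
        using insert.prems(1) that by blast
      show "p dvd poly g b" if b: "b \<in> S" for b
      proof -
        have "poly f b - poly f a = (b - a) * poly g b"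
          by (subst f_eq) (simp add: algebra_simps)
        moreover have "p dvd poly f b - poly f a"
          using insert.prems(3) b by simp
        moreover have "\<not> p dvd b - a"
          using insert b by blast
        ultimately show ?thesis
          using prime_dvd_mult_iff[OF assms(1)] by metis
      qed
    qed
  qed
  moreover have "[:p:] dvd [:poly f a:]"
    using insert.prems(3) by simp
  ultimately show ?case
    by (subst f_eq) (rule dvd_add[OF dvd_mult])
qed

lemma prod_linear_poly_cong_X_pow_minus_X:
  assumes "prime p"
  shows "[:int p:] dvd (\<Prod>k<p. [:int k, 1:]) - (monom 1 p - monom 1 1)"
proof (rule const_poly_prime_dvd_if_roots_mod[where S = "{1..int p}"])
  have "p > 1"
    using prime_gt_1_nat[OF assms] .
  show "prime (int p)" "finite {1..int p}"
    using assms by simp_all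
  show "\<not> int p dvd a - b" if "a \<in> {1..int p}" "b \<in> {1..int p}" "a \<noteq> b" for a b
    using that dvd_imp_le_int[of "a - b" "int p"] by auto
  have deg: "degree (\<Prod>k<p. [:int k, 1:]) = p"
    by (simp add: degree_prod_eq_sum_degree)
  have lead: "coeff (\<Prod>k<p. [:int k, 1:]) p = 1"
    using lead_coeff_prod[of "\<lambda>k. [:int k, 1:]" "{..<p}"] deg by simp
  show "degree ((\<Prod>k<p. [:int k, 1:]) - (monom 1 p - monom 1 1)) < card {1..int p}"
    using \<open>p > 1\<close> deg lead by (auto intro!: degree_lessI simp: coeff_monom coeff_eq_0)
  show "int p dvd poly ((\<Prod>k<p. [:int k, 1:]) - (monom 1 p - monom 1 1)) a"
    if a: "a \<in> {1..int p}" for a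
  proof -
    have "int (nat (int p - a)) + a = int p"
      using a by simp
    then have "int p dvd (\<Prod>k<p. int k + a)"
      using a by (intro dvd_prod_eqI[where a = "nat (int p - a)"]) auto
    moreover have "int p dvd a ^ p - a"
      using fermat_little_int[OF assms] by (simp add: cong_iff_dvd_diff)
    ultimately show ?thesis
      by (simp add: poly_prod poly_monom)
  qed
qed

lemma map_poly_of_int_diff:
  "map_poly (of_int :: int \<Rightarrow> 'a::comm_ring_1) (f - g) = map_poly of_int f - map_poly of_int g"
  by (rule poly_eqI) (simp add: coeff_map_poly)

lemma map_poly_of_int_mult:
  "map_poly (of_int :: int \<Rightarrow> 'a::comm_ring_1) (f * g) = map_poly of_int f * map_poly of_int g"
  by (rule poly_eqI) (simp add: coeff_map_poly coeff_mult)

lemma map_poly_of_int_prod: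
  "map_poly (of_int :: int \<Rightarrow> 'a::comm_ring_1) (\<Prod>k\<in>A. f k) = (\<Prod>k\<in>A. map_poly of_int (f k))"
  by (induction A rule: infinite_finite_induct) (simp_all add: map_poly_of_int_mult)

section \<open>Arithmetic in \<open>\<int>[\<surd>D]\<close>\<close>

lemma zs_cong_iff: "zs_cong m x y \<longleftrightarrow> [fst x = fst y] (mod m) \<and> [snd x = snd y] (mod m)"
  by (simp add: zs_cong_def cong_iff_dvd_diff)

lemma zs_cong_refl: "zs_cong m x x"
  by (simp add: zs_cong_def)

lemma zs_cong_trans: "zs_cong m x y \<Longrightarrow> zs_cong m y z \<Longrightarrow> zs_cong m x z"
  unfolding zs_cong_iff by (blast intro: cong_trans)

lemma zs_cong_of_int: "[a = b] (mod m) \<Longrightarrow> zs_cong m (a, 0) (b, 0)"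
  by (simp add: zs_cong_iff)

lemma zs_cong_mult:
  "zs_cong m x x' \<Longrightarrow> zs_cong m y y' \<Longrightarrow> zs_cong m (zs_mult D x y) (zs_mult D x' y')"
  unfolding zs_cong_iff zs_mult_def by (auto intro!: cong_add cong_mult)

lemma zs_cong_pow: "zs_cong m x y \<Longrightarrow> zs_cong m (zs_pow D x n) (zs_pow D y n)"
  by (induction n) (auto simp: zs_cong_refl zs_cong_mult)

lemma zs_pow_sqrt_even: "zs_pow D (0, b) (2 * j) = ((b * b * D) ^ j, 0)"
  by (induction j) (simp_all add: zs_mult_def)

lemma zs_pow_sqrt_odd: "zs_pow D (0, b) (Suc (2 * j)) = (0, b * (b * b * D) ^ j)"
  by (simp add: zs_pow_sqrt_even zs_mult_def)

definition zs_embed :: "'a::comm_ring_1 \<Rightarrow> int \<times> int \<Rightarrow> 'a" where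
  "zs_embed t x = of_int (fst x) + of_int (snd x) * t"

lemma zs_embed_mult:
  assumes "t ^ 2 = of_int D"
  shows "zs_embed t (zs_mult D x y) = zs_embed t x * zs_embed t y"
proof -
  have "zs_embed t x * zs_embed t y
      = of_int (fst x * fst y) + of_int (snd x * snd y) * t ^ 2 + of_int (fst x * snd y + snd x * fst y) * t"
    by (simp add: zs_embed_def power2_eq_square algebra_simps)
  then show ?thesis
    using assms by (simp add: zs_embed_def zs_mult_def)
qed

lemma zs_embed_pow:
  assumes "t ^ 2 = of_int D"
  shows "zs_embed t (zs_pow D x n) = zs_embed t x ^ n"
proof (induction n)
  case 0
  show ?case
    by (simp add: zs_embed_def)
next
  case (Suc n)
  then show ?case
    by (simp add: zs_embed_mult[OF assms])
qed

lemma zs_embed_zs_A: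
  assumes "t ^ 2 = of_int D"
  shows "zs_embed t (zs_A D n) = (\<Prod>k<n. of_nat k + t)"
proof (induction n)
  case 0
  show ?case
    by (simp add: zs_embed_def)
next
  case (Suc n)
  have "zs_embed t (int n, 1) = of_nat n + t"
    by (simp add: zs_embed_def)
  with Suc show ?case
    by (simp add: zs_embed_mult[OF assms] mult.commute)
qed

lemma ex_zs_embed_eq_poly_of_int:
  "\<exists>W. \<forall>t::'a::comm_ring_1. t ^ 2 = of_int D \<longrightarrow> poly (map_poly of_int g) t = zs_embed t W"
proof (induction g)
  case 0
  show ?case
    by (intro exI[of _ "(0, 0)"]) (simp add: zs_embed_def)
next
  case (pCons a g)
  then obtain W where W: "\<forall>t::'a. t ^ 2 = of_int D \<longrightarrow> poly (map_poly of_int g) t = zs_embed t W"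
    by blast
  show ?case
  proof (intro exI[of _ "(a + D * snd W, fst W)"] allI impI)
    fix t :: 'a
    assume t: "t ^ 2 = of_int D"
    have "t * zs_embed t W = of_int (fst W) * t + of_int (snd W) * t ^ 2"
      by (simp add: zs_embed_def power2_eq_square algebra_simps)
    then show "poly (map_poly of_int (pCons a g)) t = zs_embed t (a + D * snd W, fst W)"
      using W t by (simp add: map_poly_pCons zs_embed_def algebra_simps)
  qed
qed

lemma zs_embed_pm_inject:
  fixes t :: "'a::{idom,ring_char_0}"
  assumes "t \<noteq> 0" "zs_embed t x = zs_embed t y" "zs_embed (-t) x = zs_embed (-t) y"
  shows "x = y"
proof -
  have "2 * of_int (fst x) = (2 * of_int (fst y) :: 'a)"
    using arg_cong2[OF assms(2,3), of "(+)"] by (simp add: zs_embed_def algebra_simps)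
  then have "fst x = fst y"
    by simp
  with assms(1,2) have "snd x = snd y"
    by (simp add: zs_embed_def)
  with \<open>fst x = fst y\<close> show ?thesis
    by (simp add: prod_eq_iff)
qed

text \<open>The polynomial congruence is transported to \<open>\<int>[\<surd>D]\<close> by evaluating it at both
  complex square roots of \<open>D\<close>; together they determine an element of \<open>\<int>[\<surd>D]\<close>.\<close>
lemma zs_A_cong_sqrt_pow_minus_sqrt:
  assumes "prime p" "D \<noteq> 0"
  shows "zs_cong (int p) (zs_A D p) (fst (zs_pow D (0, 1) p), snd (zs_pow D (0, 1) p) - 1)"
proof -
  define B where "B = zs_pow D (0, 1) p"
  obtain G where G: "(\<Prod>k<p. [:int k, 1:]) - (monom 1 p - monom 1 1) = smult (int p) G"
    using prod_linear_poly_cong_X_pow_minus_X[OF assms(1)] by (auto elim: dvdE)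
  obtain W where W: "\<And>t::complex. t ^ 2 = of_int D \<Longrightarrow> poly (map_poly of_int G) t = zs_embed t W"
    using ex_zs_embed_eq_poly_of_int by blast
  define R where "R = (fst B + int p * fst W, snd B - 1 + int p * snd W)"
  have "zs_embed t (zs_A D p) = zs_embed t R" if t: "t ^ 2 = of_int D" for t :: complex
  proof -
    have "poly (map_poly of_int ((\<Prod>k<p. [:int k, 1:]) - (monom 1 p - monom 1 1))) t
        = zs_embed t (zs_A D p) - (zs_embed t B - t)"
      using t by (simp add: map_poly_of_int_diff map_poly_of_int_prod map_poly_monom poly_prod
          poly_monom map_poly_pCons zs_embed_zs_A zs_embed_pow B_def) (simp add: zs_embed_def)
    moreover have "poly (map_poly of_int (smult (int p) G)) t = of_nat p * zs_embed t W"
      using W[OF t] by (simp add: map_poly_smult)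
    ultimately show ?thesis
      using G by (simp add: R_def zs_embed_def algebra_simps)
  qed
  moreover have "csqrt (of_int D) \<noteq> 0" "(csqrt (of_int D)) ^ 2 = of_int D" "(- csqrt (of_int D)) ^ 2 = of_int D"
    using assms(2) by simp_all
  ultimately have "zs_A D p = R"
    by (intro zs_embed_pm_inject[of "csqrt (of_int D)"]) simp_all
  then show ?thesis
    by (simp add: zs_cong_def R_def B_def)
qed

lemma zs_A_cong_neg_two_sqrt:
  assumes "prime p" "2 < p" "\<not> QuadRes (int p) D"
  shows "zs_cong (int p) (zs_A D p) (0, -2)"
proof -
  have "D \<noteq> 0"
    using assms(3) unfolding QuadRes_def by (metis cong_refl zero_power2)
  have "odd p"
    using assms(1,2) prime_odd_nat by blast
  then have p_eq: "p = Suc (2 * ((p - 1) div 2))"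
    by simp
  have "zs_pow D (0, 1) p = (0, D ^ ((p - 1) div 2))"
    by (subst p_eq) (simp only: zs_pow_sqrt_odd, simp)
  moreover have "[D ^ ((p - 1) div 2) - 1 = -1 - 1] (mod int p)"
    using nonresidue_pow_half_cong[OF assms] by (intro cong_diff cong_refl)
  ultimately show ?thesis
    using zs_A_cong_sqrt_pow_minus_sqrt[OF assms(1) \<open>D \<noteq> 0\<close>]
    by (auto simp: zs_cong_iff intro: cong_trans)
qed

lemma zs_A_pow_even_cong:
  assumes "prime p" "2 < p" "\<not> QuadRes (int p) D"
  shows "zs_cong (int p) (zs_pow D (zs_A D p) (2 * j)) ((4 * D) ^ j, 0)"
  using zs_cong_pow[OF zs_A_cong_neg_two_sqrt[OF assms], of D "2 * j"]
  by (simp add: zs_pow_sqrt_even)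

lemma cong_pow_inverse:
  fixes x d d' m :: int
  assumes "[x * d ^ e = 1] (mod m)" "[d * d' = 1] (mod m)"
  shows "[x = d' ^ e] (mod m)"
proof -
  have "[x = x * (d * d') ^ e] (mod m)"
    using assms(2) by (metis cong_pow cong_scalar_left cong_sym mult_1_right power_one)
  also have "x * (d * d') ^ e = (x * d ^ e) * d' ^ e"
    by (simp add: power_mult_distrib)
  also have "[\<dots> = 1 * d' ^ e] (mod m)"
    using assms(1) by (rule cong_scalar_right)
  finally show ?thesis by simp
qed

lemma four_mul_pow_cong_1mod4:
  assumes "prime p" "p = 4 * e + 1" "\<not> QuadRes (int p) D"
  shows "[(4 * D) ^ (e * (2 * e - 1)) * D ^ e = 1] (mod int p)"
proof -
  have "2 < p" "e \<ge> 1"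
    using assms prime_gt_1_nat[OF assms(1)] by auto
  have "(4 * D) ^ (e * (2 * e - 1)) * D ^ e = 2 ^ (2 * (e * (2 * e - 1))) * D ^ (e * (2 * e - 1) + e)"
    by (simp add: power_mult_distrib power_add power_mult)
  also have "\<dots> = (2 ^ (2 * e)) ^ (2 * e - 1) * (D ^ (2 * e)) ^ e"
  proof -
    have "e * (2 * e - 1) + e = 2 * e * e"
      using \<open>e \<ge> 1\<close> by (simp add: algebra_simps)
    then show ?thesis
      by (simp only: power_mult mult.assoc)
  qed
  also have "[\<dots> = ((-1) ^ e) ^ (2 * e - 1) * ((-1) ^ e)] (mod int p)"
    using two_pow_cong_neg_one_pow[OF assms(1,2)] nonresidue_pow_half_cong[OF assms(1) \<open>2 < p\<close> assms(3)]
      assms(2)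
    by (intro cong_mult cong_pow) auto
  also have "((-1 :: int) ^ e) ^ (2 * e - 1) * ((-1) ^ e) = 1"
    using \<open>e \<ge> 1\<close> by (simp flip: power_mult power_add)
  finally show ?thesis .
qed

lemma four_mul_pow_cong_3mod4:
  assumes "prime p" "p = 4 * q + 3" "\<not> QuadRes (int p) D"
  shows "[(4 * D) ^ ((2 * q + 1) * q) = (-1) ^ q] (mod int p)"
proof -
  have "2 < p" "\<not> int p dvd 2"
    using assms by (auto simp: zdvd_not_zless)
  have "(4 * D) ^ (2 * q + 1) = 2 ^ (p - 1) * D ^ ((p - 1) div 2)"
    using assms(2) by (simp add: power_mult_distrib power_mult)
  also have "[\<dots> = 1 * -1] (mod int p)"
    using fermat_theorem_int[OF assms(1) \<open>\<not> int p dvd 2\<close>]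
      nonresidue_pow_half_cong[OF assms(1) \<open>2 < p\<close> assms(3)]
    by (rule cong_mult)
  finally have "[((4 * D) ^ (2 * q + 1)) ^ q = (-1) ^ q] (mod int p)"
    by (intro cong_pow) simp
  then show ?thesis
    by (simp only: power_mult)
qed

theorem lemma2p1:
  fixes p :: nat and D :: int
  assumes "prime p" and "odd p"
    and "[D = 3] (mod 4)"
    and "\<not> QuadRes (int p) D"
  shows "([p = 1] (mod 4) \<longrightarrow>
            (\<forall>Dinv :: int. [D * Dinv = 1] (mod int p) \<longrightarrow>
               zs_cong (int p) (zs_pow D (zs_A D p) ((p - 1) * (p - 3) div 4))
                               (Dinv ^ ((p - 1) div 4), 0)))
       \<and> ([p = 3] (mod 4) \<longrightarrow>
               zs_cong (int p) (zs_pow D (zs_A D p) ((p - 1) * (p - 3) div 4))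
                               ((-1) ^ ((p - 3) div 4), 0))"
proof -
  have "2 < p"
    using assms(1,2) prime_ge_2_nat[OF assms(1)] by (cases "p = 2") auto
  note A_pow = zs_A_pow_even_cong[OF assms(1) this assms(4)]
  show ?thesis
  proof (intro conjI impI allI)
    fix Dinv :: int
    assume "[p = 1] (mod 4)" and Dinv: "[D * Dinv = 1] (mod int p)"
    define e where "e = p div 4"
    have p_eq: "p = 4 * e + 1"
      using \<open>[p = 1] (mod 4)\<close> unfolding e_def cong_def by presburger
    then have "e \<ge> 1"
      using \<open>2 < p\<close> by simp
    then have "(p - 1) * (p - 3) div 4 = 2 * (e * (2 * e - 1))" "(p - 1) div 4 = e"
      using p_eq by (cases e; simp add: algebra_simps)+
    moreover have "[(4 * D) ^ (e * (2 * e - 1)) = Dinv ^ e] (mod int p)"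
      using four_mul_pow_cong_1mod4[OF assms(1) p_eq assms(4)] Dinv by (rule cong_pow_inverse)
    ultimately show "zs_cong (int p) (zs_pow D (zs_A D p) ((p - 1) * (p - 3) div 4))
        (Dinv ^ ((p - 1) div 4), 0)"
      using zs_cong_trans[OF A_pow zs_cong_of_int] by simp
  next
    assume "[p = 3] (mod 4)"
    define q where "q = p div 4"
    have p_eq: "p = 4 * q + 3"
      using \<open>[p = 3] (mod 4)\<close> unfolding q_def cong_def by presburger
    then have "(p - 1) * (p - 3) div 4 = 2 * ((2 * q + 1) * q)" "(p - 3) div 4 = q"
      by (simp_all add: algebra_simps)
    then show "zs_cong (int p) (zs_pow D (zs_A D p) ((p - 1) * (p - 3) div 4))
        ((-1) ^ ((p - 3) div 4), 0)"
      using zs_cong_trans[OF A_pow zs_cong_of_int[OF four_mul_pow_cong_3mod4[OF assms(1) p_eq assms(4)]]]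
      by simp
  qed
qed

end
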